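(* For every instance, $$\mathrm{opt}_M\text{-}\mathrm{SUM}\le \mathrm{opt}_D\text{-}\mathrm{EMP}\qquad\text{and}\qquad \mathrm{opt}_M\text{-}\mathrm{MAX}\le\mathrm{opt}_D\text{-}\mathrm{WMP}.$$
   Context: An instance consists of a finite set $E$ of elements with nonnegative weights $(p_e)$ (normalized $\sum_ep_e=1$ for SUM objectives, $\max_ep_e=1$ for MAX objectives) and $m$ tests, test $i$ being a subset $s_i\subseteq E$. A deterministic schedule is a fixed infinite test sequence $\sigma_1,\sigma_2,\dots$; a memoryless schedule draws each $\sigma_t$ i.i.d. from a distribution $q$ on tests. Detection time $T(e,t)=\mathbb{E}[1+\min\{h\ge0:e\in s_{\sigma_{t+h}}\}]$, $M_t[e]=\sup_tT(e,t)$, $E_t[e]=\lim_H\frac1H\sum_{t\le H}T(e,t)$; valid schedules have $M_t[e]<\infty$ and $E_t[e]$ existing for all $e$, and convergent test frequencies $\lim_H\frac1H\sum_{t\le H}\Pr[\sigma_t=i]$. $\mathrm{EMP}=\sum_ep_eM_t[e]$, $\mathrm{WMP}=\sup_{e,t}p_eT(e,t)$. $\mathrm{opt}_D\text{-}X$ is the infimum of $X$ over valid deterministic schedules; $\mathrm{opt}_M\text{-}\mathrm{SUM}=\inf_q\sum_ep_e/Q_e$ and $\mathrm{opt}_M\text{-}\mathrm{MAX}=\inf_q\max_ep_e/Q_e$ over distributions $q$ on tests, where $Q_e=\sum_{i:e\in s_i}q_i$ (these are the optimal values of the SUM and MAX objectives over memoryless schedules). *)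

theory Defs
  imports Complex_Main "HOL-Library.Extended_Real"
begin

text \<open>Instance: finite element set E, weights p, tests s 0, ..., s (m-1).
  A deterministic schedule is sigma :: nat => nat (sigma t = index of the test at time t).\<close>

definition det_time :: "(nat \<Rightarrow> 'e set) \<Rightarrow> (nat \<Rightarrow> nat) \<Rightarrow> 'e \<Rightarrow> nat \<Rightarrow> ereal" where
  "det_time s \<sigma> e t =
     (if \<exists>h. e \<in> s (\<sigma> (t + h))
      then ereal (real (1 + (LEAST h. e \<in> s (\<sigma> (t + h))))) else \<infinity>)"

definition max_time :: "(nat \<Rightarrow> 'e set) \<Rightarrow> (nat \<Rightarrow> nat) \<Rightarrow> 'e \<Rightarrow> ereal" where
  "max_time s \<sigma> e = (SUP t. det_time s \<sigma> e t)"

definition valid_det :: "'e set \<Rightarrow> nat \<Rightarrow> (nat \<Rightarrow> 'e set) \<Rightarrow> (nat \<Rightarrow> nat) \<Rightarrow> bool" where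
  "valid_det E m s \<sigma> \<longleftrightarrow>
     (\<forall>t. \<sigma> t < m) \<and>
     (\<forall>e\<in>E. max_time s \<sigma> e < \<infinity>) \<and>
     (\<forall>e\<in>E. convergent (\<lambda>H. (\<Sum>t<H. real_of_ereal (det_time s \<sigma> e t)) / real H)) \<and>
     (\<forall>i<m. convergent (\<lambda>H. real (card {t. t < H \<and> \<sigma> t = i}) / real H))"

definition EMP :: "'e set \<Rightarrow> ('e \<Rightarrow> real) \<Rightarrow> (nat \<Rightarrow> 'e set) \<Rightarrow> (nat \<Rightarrow> nat) \<Rightarrow> ereal" where
  "EMP E p s \<sigma> = (\<Sum>e\<in>E. ereal (p e) * max_time s \<sigma> e)"

definition WMP :: "'e set \<Rightarrow> ('e \<Rightarrow> real) \<Rightarrow> (nat \<Rightarrow> 'e set) \<Rightarrow> (nat \<Rightarrow> nat) \<Rightarrow> ereal" where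
  "WMP E p s \<sigma> = (SUP e\<in>E. SUP t. ereal (p e) * det_time s \<sigma> e t)"

definition optD_EMP :: "'e set \<Rightarrow> ('e \<Rightarrow> real) \<Rightarrow> nat \<Rightarrow> (nat \<Rightarrow> 'e set) \<Rightarrow> ereal" where
  "optD_EMP E p m s = (INF \<sigma>\<in>{\<sigma>. valid_det E m s \<sigma>}. EMP E p s \<sigma>)"

definition optD_WMP :: "'e set \<Rightarrow> ('e \<Rightarrow> real) \<Rightarrow> nat \<Rightarrow> (nat \<Rightarrow> 'e set) \<Rightarrow> ereal" where
  "optD_WMP E p m s = (INF \<sigma>\<in>{\<sigma>. valid_det E m s \<sigma>}. WMP E p s \<sigma>)"

definition test_dist :: "nat \<Rightarrow> (nat \<Rightarrow> real) \<Rightarrow> bool" where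
  "test_dist m q \<longleftrightarrow> (\<forall>i<m. 0 \<le> q i) \<and> (\<Sum>i<m. q i) = 1"

definition cover_prob :: "nat \<Rightarrow> (nat \<Rightarrow> 'e set) \<Rightarrow> (nat \<Rightarrow> real) \<Rightarrow> 'e \<Rightarrow> real" where
  "cover_prob m s q e = (\<Sum>i\<in>{i. i < m \<and> e \<in> s i}. q i)"

text \<open>p / Q with conventions 0 / Q = 0 and p / 0 = \<infinity> for p > 0.\<close>
definition ratio :: "real \<Rightarrow> real \<Rightarrow> ereal" where
  "ratio a b = (if a = 0 then 0 else if b = 0 then \<infinity> else ereal (a / b))"

definition optM_SUM :: "'e set \<Rightarrow> ('e \<Rightarrow> real) \<Rightarrow> nat \<Rightarrow> (nat \<Rightarrow> 'e set) \<Rightarrow> ereal" where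
  "optM_SUM E p m s = (INF q\<in>{q. test_dist m q}. \<Sum>e\<in>E. ratio (p e) (cover_prob m s q e))"

definition optM_MAX :: "'e set \<Rightarrow> ('e \<Rightarrow> real) \<Rightarrow> nat \<Rightarrow> (nat \<Rightarrow> 'e set) \<Rightarrow> ereal" where
  "optM_MAX E p m s = (INF q\<in>{q. test_dist m q}. SUP e\<in>E. ratio (p e) (cover_prob m s q e))"

end

theory Submission imports Defs begin

text \<open>Turn a valid deterministic schedule into the memoryless one that draws each test with its
  long-run frequency. If element e is always detected within K = M_t[e] steps, every window of
  K consecutive time steps contains a test covering e, so the tests covering e have total frequency
  at least 1/K; hence p_e / Q_e \<le> p_e M_t[e]. Moreover K is attained as some T(e,t), which gives
  the same bound against p_e T(e,t) for the MAX objective.\<close>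

definition test_freq :: "(nat \<Rightarrow> nat) \<Rightarrow> nat \<Rightarrow> real" where
  "test_freq \<sigma> i = lim (\<lambda>H. real (card {t. t < H \<and> \<sigma> t = i}) / real H)"

lemma det_time_le_max_time: "det_time s \<sigma> e t \<le> max_time s \<sigma> e"
  unfolding max_time_def by (rule SUP_upper) simp

lemma max_time_finite_imp_hit:
  assumes "max_time s \<sigma> e < \<infinity>"
  shows "\<exists>h. e \<in> s (\<sigma> (t + h))"
  using assms det_time_le_max_time[of s \<sigma> e t] by (auto simp: det_time_def split: if_splits)

lemma max_time_finite_attained:
  assumes "max_time s \<sigma> e < \<infinity>"
  obtains K t0 where "K \<ge> 1" "det_time s \<sigma> e t0 = ereal (real K)"
    "max_time s \<sigma> e = ereal (real K)" "\<And>t. \<exists>h<K. e \<in> s (\<sigma> (t + h))"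
proof -
  obtain b where b: "max_time s \<sigma> e = ereal b"
    using assms det_time_le_max_time[of s \<sigma> e 0]
    by (cases "max_time s \<sigma> e") (auto simp: det_time_def split: if_splits)
  note hit = max_time_finite_imp_hit[OF assms]
  define f where "f t = 1 + (LEAST h. e \<in> s (\<sigma> (t + h)))" for t
  have det_time_f: "det_time s \<sigma> e t = ereal (real (f t))" for t
    unfolding det_time_def f_def using hit[of t] by simp
  have "real (f t) \<le> b" for t
    using det_time_le_max_time[of s \<sigma> e t] b det_time_f[of t] by simp
  then have f_bounded: "f t \<le> nat \<lceil>b\<rceil>" for t
    by (meson order_trans real_nat_ceiling_ge of_nat_le_iff)
  have fin: "finite (range f)"
    by (rule finite_subset[of _ "{..nat \<lceil>b\<rceil>}"]) (auto simp: f_bounded)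
  define K where "K = Max (range f)"
  have "K \<in> range f"
    unfolding K_def using fin by (intro Max_in) auto
  then obtain t0 where t0: "f t0 = K"
    by blast
  have f_le: "f t \<le> K" for t
    unfolding K_def using fin by (intro Max_ge) auto
  have "max_time s \<sigma> e = ereal (real K)"
  proof (rule antisym)
    show "max_time s \<sigma> e \<le> ereal (real K)"
      unfolding max_time_def by (rule SUP_least) (simp add: det_time_f f_le)
    show "ereal (real K) \<le> max_time s \<sigma> e"
      using det_time_le_max_time[of s \<sigma> e t0] det_time_f[of t0] t0 by simp
  qed
  moreover have "\<exists>h<K. e \<in> s (\<sigma> (t + h))" for t
  proof -
    have "(LEAST h. e \<in> s (\<sigma> (t + h))) < K"
      using f_le[of t] unfolding f_def by simp
    with LeastI_ex[OF hit[of t]] show ?thesis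
      by blast
  qed
  moreover have "K \<ge> 1"
    using t0 unfolding f_def by auto
  ultimately show ?thesis
    using that det_time_f[of t0] t0 by blast
qed

lemma card_hits_ge_div:
  assumes "\<And>t. \<exists>h<K. D (t + h)"
  shows "H div K \<le> card {t. t < H \<and> D t}"
proof -
  have "j \<le> card {t. t < j * K \<and> D t}" for j
  proof (induction j)
    case 0
    then show ?case by simp
  next
    case (Suc j)
    obtain h where h: "h < K" "D (j * K + h)"
      using assms by blast
    have "Suc (card {t. t < j * K \<and> D t}) = card (insert (j * K + h) {t. t < j * K \<and> D t})"
      by (rule card_insert_disjoint[symmetric]) auto
    also have "\<dots> \<le> card {t. t < Suc j * K \<and> D t}"
      using h by (intro card_mono) auto
    finally show ?case
      using Suc.IH by simp
  qed
  also have "card {t. t < H div K * K \<and> D t} \<le> card {t. t < H \<and> D t}"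
    by (intro card_mono) (auto intro: order.strict_trans2 div_times_less_eq_dividend)
  finally show ?thesis .
qed

lemma hit_frequency_ge_inverse_gap:
  assumes "\<And>t. \<exists>h<K. D (t + h)"
    and "(\<lambda>H. real (card {t. t < H \<and> D t}) / real H) \<longlonglongrightarrow> L"
  shows "1 / real K \<le> L"
proof (rule LIMSEQ_le[OF _ assms(2)])
  have "K > 0"
    using assms(1)[of 0] by fastforce
  show "(\<lambda>H. 1 / real K - 1 / real H) \<longlonglongrightarrow> 1 / real K"
    using tendsto_diff[OF tendsto_const lim_inverse_n'] by simp
  show "\<exists>N. \<forall>H\<ge>N. 1 / real K - 1 / real H \<le> real (card {t. t < H \<and> D t}) / real H"
  proof (intro exI allI impI)
    fix H :: nat
    assume "H \<ge> 1"
    have "real H < real K + real (H div K) * real K"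
      using dividend_less_div_times[OF \<open>K > 0\<close>, of H] by (simp flip: of_nat_mult of_nat_add)
    then have "real H / real K - 1 \<le> real (H div K)"
      using \<open>K > 0\<close> by (simp add: field_simps)
    also have "\<dots> \<le> real (card {t. t < H \<and> D t})"
      using card_hits_ge_div[OF assms(1)] by simp
    finally have "(real H / real K - 1) / real H \<le> real (card {t. t < H \<and> D t}) / real H"
      by (simp add: divide_right_mono)
    then show "1 / real K - 1 / real H \<le> real (card {t. t < H \<and> D t}) / real H"
      using \<open>H \<ge> 1\<close> by (simp add: diff_divide_distrib)
  qed
qed

lemma frequency_in_set_tendsto:
  assumes "finite I" and "\<And>i. i \<in> I \<Longrightarrow> convergent (\<lambda>H. real (card {t. t < H \<and> \<sigma> t = i}) / real H)"
  shows "(\<lambda>H. real (card {t. t < H \<and> \<sigma> t \<in> I}) / real H) \<longlonglongrightarrow> (\<Sum>i\<in>I. test_freq \<sigma> i)"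
proof -
  have "card {t. t < H \<and> \<sigma> t \<in> I} = (\<Sum>i\<in>I. card {t. t < H \<and> \<sigma> t = i})" for H
  proof -
    have "{t. t < H \<and> \<sigma> t \<in> I} = (\<Union>i\<in>I. {t. t < H \<and> \<sigma> t = i})"
      by auto
    also have "card \<dots> = (\<Sum>i\<in>I. card {t. t < H \<and> \<sigma> t = i})"
      by (rule card_UN_disjoint[OF \<open>finite I\<close>]) (auto intro: finite_subset[of _ "{..<H}"])
    finally show ?thesis .
  qed
  then have "real (card {t. t < H \<and> \<sigma> t \<in> I}) / real H
      = (\<Sum>i\<in>I. real (card {t. t < H \<and> \<sigma> t = i}) / real H)" for H
    by (simp add: sum_divide_distrib)
  moreover have "(\<lambda>H. \<Sum>i\<in>I. real (card {t. t < H \<and> \<sigma> t = i}) / real H) \<longlonglongrightarrow> (\<Sum>i\<in>I. test_freq \<sigma> i)"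
    using assms(2) unfolding test_freq_def by (intro tendsto_sum) (simp add: convergent_LIMSEQ_iff)
  ultimately show ?thesis
    by simp
qed

lemma valid_det_test_dist:
  assumes "valid_det E m s \<sigma>"
  shows "test_dist m (test_freq \<sigma>)"
proof -
  have lt: "\<And>t. \<sigma> t < m"
    and conv: "\<And>i. i < m \<Longrightarrow> convergent (\<lambda>H. real (card {t. t < H \<and> \<sigma> t = i}) / real H)"
    using assms unfolding valid_det_def by auto
  have "0 \<le> test_freq \<sigma> i" if "i < m" for i
  proof (rule LIMSEQ_le_const)
    show "(\<lambda>H. real (card {t. t < H \<and> \<sigma> t = i}) / real H) \<longlonglongrightarrow> test_freq \<sigma> i"
      using conv[OF that] unfolding test_freq_def by (simp add: convergent_LIMSEQ_iff)
  qed simp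
  moreover have "(\<Sum>i<m. test_freq \<sigma> i) = 1"
  proof (rule LIMSEQ_unique)
    show "(\<lambda>H. real (card {t. t < H \<and> \<sigma> t \<in> {..<m}}) / real H) \<longlonglongrightarrow> (\<Sum>i<m. test_freq \<sigma> i)"
      using conv by (intro frequency_in_set_tendsto) auto
    have "{t. t < H \<and> \<sigma> t \<in> {..<m}} = {..<H}" for H
      using lt by auto
    then show "(\<lambda>H. real (card {t. t < H \<and> \<sigma> t \<in> {..<m}}) / real H) \<longlonglongrightarrow> 1"
      by (intro tendsto_eventually) (auto simp: eventually_sequentially intro!: exI[of _ 1])
  qed
  ultimately show ?thesis
    unfolding test_dist_def by blast
qed

lemma valid_det_cover_prob_ge:
  assumes "valid_det E m s \<sigma>" and "\<And>t. \<exists>h<K. e \<in> s (\<sigma> (t + h))"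
  shows "1 / real K \<le> cover_prob m s (test_freq \<sigma>) e"
proof (rule hit_frequency_ge_inverse_gap[OF assms(2)])
  have lt: "\<And>t. \<sigma> t < m" and conv: "\<And>i. i < m \<Longrightarrow> convergent (\<lambda>H. real (card {t. t < H \<and> \<sigma> t = i}) / real H)"
    using assms(1) unfolding valid_det_def by auto
  have "{t. t < H \<and> \<sigma> t \<in> {i. i < m \<and> e \<in> s i}} = {t. t < H \<and> e \<in> s (\<sigma> t)}" for H
    using lt by auto
  then show "(\<lambda>H. real (card {t. t < H \<and> e \<in> s (\<sigma> t)}) / real H) \<longlonglongrightarrow> cover_prob m s (test_freq \<sigma>) e"
    using frequency_in_set_tendsto[of "{i. i < m \<and> e \<in> s i}" \<sigma>] conv
    unfolding cover_prob_def by simp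
qed

lemma ratio_le_mult:
  assumes "0 \<le> a" and "0 < K" and "1 / K \<le> Q"
  shows "ratio a Q \<le> ereal (a * K)"
proof (cases "a = 0")
  case True
  then show ?thesis
    by (simp add: ratio_def)
next
  case False
  have "0 < Q"
    using assms(2,3) by (meson divide_pos_pos order_less_le_trans zero_less_one)
  moreover have "a / Q \<le> a * K"
  proof -
    have "1 \<le> Q * K"
      using assms(2,3) by (simp add: field_simps)
    then have "a \<le> a * (Q * K)"
      using assms(1) by (simp add: mult_le_cancel_left1)
    then show ?thesis
      using \<open>0 < Q\<close> by (simp add: field_simps)
  qed
  ultimately show ?thesis
    using False by (simp add: ratio_def)
qed

lemma ratio_cover_prob_le_max_time:
  assumes "valid_det E m s \<sigma>" and "e \<in> E" and "0 \<le> p e"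
  obtains t0 where "det_time s \<sigma> e t0 = max_time s \<sigma> e"
    and "ratio (p e) (cover_prob m s (test_freq \<sigma>) e) \<le> ereal (p e) * max_time s \<sigma> e"
proof -
  have "max_time s \<sigma> e < \<infinity>"
    using assms(1,2) unfolding valid_det_def by blast
  then obtain K t0 where "K \<ge> 1" and "det_time s \<sigma> e t0 = ereal (real K)"
    and K: "max_time s \<sigma> e = ereal (real K)" and "\<And>t. \<exists>h<K. e \<in> s (\<sigma> (t + h))"
    by (rule max_time_finite_attained) blast
  moreover have "ratio (p e) (cover_prob m s (test_freq \<sigma>) e) \<le> ereal (p e * real K)"
    using assms(1,3) \<open>K \<ge> 1\<close> \<open>\<And>t. \<exists>h<K. e \<in> s (\<sigma> (t + h))\<close>
    by (intro ratio_le_mult valid_det_cover_prob_ge) auto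
  ultimately show ?thesis
    using that by simp
qed

theorem lemma8:
  fixes E :: "'e set" and p :: "'e \<Rightarrow> real" and m :: nat and s :: "nat \<Rightarrow> 'e set"
  assumes "finite E"
    and "\<forall>e\<in>E. 0 \<le> p e"
    and "\<forall>i<m. s i \<subseteq> E"
  shows "((\<Sum>e\<in>E. p e) = 1 \<longrightarrow> optM_SUM E p m s \<le> optD_EMP E p m s) \<and>
         ((\<forall>e\<in>E. p e \<le> 1) \<and> (\<exists>e\<in>E. p e = 1) \<longrightarrow> optM_MAX E p m s \<le> optD_WMP E p m s)"
proof -
  have bound: "\<exists>t0. det_time s \<sigma> e t0 = max_time s \<sigma> e \<and>
      ratio (p e) (cover_prob m s (test_freq \<sigma>) e) \<le> ereal (p e) * max_time s \<sigma> e"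
    if "valid_det E m s \<sigma>" and "e \<in> E" for \<sigma> e
    using ratio_cover_prob_le_max_time[OF that] assms(2) that(2) by metis
  have "optM_SUM E p m s \<le> EMP E p s \<sigma>" if "valid_det E m s \<sigma>" for \<sigma>
  proof -
    have "optM_SUM E p m s \<le> (\<Sum>e\<in>E. ratio (p e) (cover_prob m s (test_freq \<sigma>) e))"
      unfolding optM_SUM_def using valid_det_test_dist[OF that] by (intro INF_lower) simp
    also have "\<dots> \<le> EMP E p s \<sigma>"
      unfolding EMP_def using bound[OF that] by (intro sum_mono) blast
    finally show ?thesis .
  qed
  moreover have "optM_MAX E p m s \<le> WMP E p s \<sigma>" if "valid_det E m s \<sigma>" for \<sigma>
  proof -
    have "optM_MAX E p m s \<le> (SUP e\<in>E. ratio (p e) (cover_prob m s (test_freq \<sigma>) e))"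
      unfolding optM_MAX_def using valid_det_test_dist[OF that] by (intro INF_lower) simp
    also have "\<dots> \<le> WMP E p s \<sigma>"
      unfolding WMP_def using bound[OF that]
      by (intro SUP_mono) (metis SUP_upper UNIV_I dual_order.trans)
    finally show ?thesis .
  qed
  ultimately show ?thesis
    unfolding optD_EMP_def optD_WMP_def by (auto intro: INF_greatest)
qed

end
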